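(* Let $a,b,p$ be integers with $a,b,p>1$ and $\gcd(a,b)=1$. Then the numerical semigroup $S=\langle a^p,\ a^p+b,\ a^p+ab,\ \dots,\ a^p+a^{p-1}b\rangle$ has $\alpha$-rectangular Apéry set and is not telescopic.
   Context: A numerical semigroup is a submonoid $S$ of $(\mathbb N,+)$ with finite complement in $\mathbb N$; $g_1<\dots<g_\nu$ is its minimal system of generators, $m=g_1$, and $\mathrm{Ap}(S)=\{s\in S: s-m\notin S\}$. For $i=2,\dots,\nu$: $\alpha_i=\max\{h\in\mathbb N: hg_i\in\mathrm{Ap}(S)\}$ and $\tau_i=\min\{h\in\mathbb N: hg_i\in\langle g_1,\dots,g_{i-1}\rangle\}-1$. $\mathrm{Ap}(S)$ is $\alpha$-rectangular if $\mathrm{Ap}(S)=\{\sum_{i=2}^\nu\lambda_ig_i: 0\le\lambda_i\le\alpha_i\}$; $S$ is telescopic if $\mathrm{Ap}(S)=\{\sum_{i=2}^\nu\lambda_ig_i: 0\le\lambda_i\le\tau_i\}$. *)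

theory Defs
  imports Main
begin

inductive_set monoid_gen :: "nat set \<Rightarrow> nat set" for G :: "nat set" where
  zero: "0 \<in> monoid_gen G"
| add: "g \<in> G \<Longrightarrow> x \<in> monoid_gen G \<Longrightarrow> g + x \<in> monoid_gen G"

definition numerical_semigroup :: "nat set \<Rightarrow> bool" where
  "numerical_semigroup S \<longleftrightarrow> 0 \<in> S \<and> (\<forall>x\<in>S. \<forall>y\<in>S. x + y \<in> S) \<and> finite (UNIV - S)"

definition mingens :: "nat set \<Rightarrow> nat set" where
  "mingens S = {x \<in> S. x \<noteq> 0 \<and> \<not> (\<exists>y\<in>S. \<exists>z\<in>S. y \<noteq> 0 \<and> z \<noteq> 0 \<and> x = y + z)}"

text \<open>Embedding dimension nu and the generators g_1 < ... < g_nu (1-indexed).\<close>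
definition edim :: "nat set \<Rightarrow> nat" where
  "edim S = card (mingens S)"

definition gen :: "nat set \<Rightarrow> nat \<Rightarrow> nat" where
  "gen S i = sorted_list_of_set (mingens S) ! (i - 1)"

definition multiplicity :: "nat set \<Rightarrow> nat" where
  "multiplicity S = gen S 1"

text \<open>Apery set w.r.t. the multiplicity: s in S with s - m not in S (as an integer).\<close>
definition Apery :: "nat set \<Rightarrow> nat set" where
  "Apery S = {s \<in> S. \<not> (multiplicity S \<le> s \<and> s - multiplicity S \<in> S)}"

definition alpha :: "nat set \<Rightarrow> nat \<Rightarrow> nat" where
  "alpha S i = Max {h. h * gen S i \<in> Apery S}"

definition tau :: "nat set \<Rightarrow> nat \<Rightarrow> nat" where
  "tau S i = (LEAST h. h \<ge> 1 \<and> h * gen S i \<in> monoid_gen {gen S j | j. 1 \<le> j \<and> j < i}) - 1"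

definition box_set :: "nat set \<Rightarrow> (nat \<Rightarrow> nat) \<Rightarrow> nat set" where
  "box_set S bnd = {\<Sum>i\<in>{2..edim S}. lam i * gen S i | lam. \<forall>i\<in>{2..edim S}. lam i \<le> bnd i}"

definition alpha_rectangular :: "nat set \<Rightarrow> bool" where
  "alpha_rectangular S \<longleftrightarrow> Apery S = box_set S (alpha S)"

definition telescopic :: "nat set \<Rightarrow> bool" where
  "telescopic S \<longleftrightarrow> Apery S = box_set S (tau S)"

end

theory Submission
  imports Defs "HOL-Number_Theory.Cong"
begin

(*
  Put m = a^p and g_k = a^p + a^k b for k < p. An element c m + \<Sum> \<mu>_k g_k of S equals C m + b M
  with C = c + \<Sum> \<mu>_k and M = \<Sum> \<mu>_k a^k; as a^k has base-a digit sum 1 and digit sums are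
  subadditive, the sum of the p lowest base-a digits of M is at most C.

  Since a g_k - m lies in S, every element of the Apery set is \<Sum> \<lambda>_k g_k with all \<lambda>_k < a.
  Conversely such an element is L m + b N, where N < m has the base-a digits \<lambda>_k and digit sum L.
  If it were m + y with y = C m + b M in S, coprimality of m and b would give M = N (mod m), so
  L \<le> C, which forces M < N < m and hence M = N. Thus Ap(S) is the box with all \<alpha>_k = a - 1.
  But h g_2 lies in <m> only if m divides h, so \<tau>_2 \<ge> m - 1 \<ge> a, and a g_2 lies in the
  telescopic box although it is not in Ap(S).
*)

fun digit_sum :: "nat \<Rightarrow> nat \<Rightarrow> nat \<Rightarrow> nat" where
  "digit_sum a 0 n = 0"
| "digit_sum a (Suc p) n = n mod a + digit_sum a p (n div a)"

lemma digit_sum_0_right [simp]: "digit_sum a p 0 = 0"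
  by (induction p) auto

lemma digit_sum_le: "digit_sum a p n \<le> n"
proof (induction p arbitrary: n)
  case (Suc p)
  have "n div a + n mod a \<le> n"
  proof (cases "a = 0")
    case False
    then have "n div a \<le> n div a * a"
      by simp
    then show ?thesis
      using div_mult_mod_eq[of n a] by linarith
  qed simp
  then show ?case
    using Suc[of "n div a"] by simp
qed simp

lemma digit_sum_add_le:
  assumes "0 < a"
  shows "digit_sum a p (x + y) \<le> digit_sum a p x + digit_sum a p y"
  using assms
proof (induction p arbitrary: x y)
  case (Suc p)
  \<comment> \<open>the carry c \<le> 1 lowers the lowest digit by a c and the higher digit sum rises by \<le> c\<close>
  define c where "c = (x mod a + y mod a) div a"
  have div: "(x + y) div a = x div a + y div a + c"
    unfolding c_def by (rule div_add1_eq)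
  have mod: "x mod a + y mod a = a * c + (x + y) mod a"
    unfolding c_def by (metis mod_add_eq div_mult_mod_eq mult.commute)
  have "x mod a + y mod a < 2 * a"
    using Suc.prems by (simp add: add_less_mono mult_2)
  then have "c \<le> 1"
    unfolding c_def using less_mult_imp_div_less by fastforce
  then have "digit_sum a p ((x + y) div a) \<le> digit_sum a p (x div a) + digit_sum a p (y div a) + c"
    using Suc.IH[of "x div a + y div a" c] Suc.IH[of "x div a" "y div a"] Suc.prems div
      digit_sum_le[of a p c]
    by simp
  moreover have "c \<le> a * c"
    using Suc.prems by simp
  ultimately show ?case
    using mod by (simp only: digit_sum.simps)
qed simp

lemma digit_sum_power_le:
  assumes "0 < a"
  shows "digit_sum a p (a ^ k) \<le> 1"
  using assms
proof (induction p arbitrary: k)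
  case (Suc p)
  then show ?case
    using digit_sum_le[of a "Suc p" 1] by (cases k) auto
qed simp

lemma digit_sum_mult_le: "0 < a \<Longrightarrow> digit_sum a p (n * x) \<le> n * digit_sum a p x"
  by (induction n) (auto intro: order.trans[OF digit_sum_add_le])

lemma digit_sum_sum_le: "0 < a \<Longrightarrow> digit_sum a p (\<Sum>k\<in>A. f k) \<le> (\<Sum>k\<in>A. digit_sum a p (f k))"
  by (induction A rule: infinite_finite_induct) (auto intro: order.trans[OF digit_sum_add_le])

lemma digit_sum_mod_power: "digit_sum a p (n mod a ^ p) = digit_sum a p n"
proof (induction p arbitrary: n)
  case (Suc p)
  have "n mod a ^ Suc p = a * (n div a mod a ^ p) + n mod a"
    by (simp add: mod_mult2_eq)
  then have "n mod a ^ Suc p mod a = n mod a" and "n mod a ^ Suc p div a = n div a mod a ^ p"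
    by (cases "a = 0"; simp)+
  then show ?case
    using Suc by simp
qed simp

lemma digits_sum_less_power:
  fixes d :: "nat \<Rightarrow> nat"
  assumes "\<forall>k<p. d k < a"
  shows "(\<Sum>k<p. d k * a ^ k) < a ^ p"
  using assms
proof (induction p)
  case (Suc p)
  have "Suc (d p) * a ^ p \<le> a * a ^ p"
    using Suc.prems by (intro mult_le_mono1) (simp add: Suc_le_eq)
  then show ?case
    using Suc by simp
qed simp

lemma digit_sum_digits:
  fixes d :: "nat \<Rightarrow> nat"
  assumes "\<forall>k<p. d k < a"
  shows "digit_sum a p (\<Sum>k<p. d k * a ^ k) = (\<Sum>k<p. d k)"
  using assms
proof (induction p arbitrary: d)
  case (Suc p)
  define r where "r = (\<Sum>k<p. d (Suc k) * a ^ k)"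
  have "(\<Sum>k<Suc p. d k * a ^ k) = d 0 + a * r"
    unfolding r_def sum.lessThan_Suc_shift by (simp add: sum_distrib_left ac_simps)
  moreover have "d 0 < a"
    using Suc.prems by simp
  moreover have "digit_sum a p r = (\<Sum>k<p. d (Suc k))"
    unfolding r_def using Suc by simp
  ultimately show ?case
    unfolding sum.lessThan_Suc_shift[of d] by simp
qed simp

lemma monoid_gen_add: "x \<in> monoid_gen G \<Longrightarrow> y \<in> monoid_gen G \<Longrightarrow> x + y \<in> monoid_gen G"
  by (induction x rule: monoid_gen.induct) (auto simp: add.assoc intro: monoid_gen.add)

lemma generator_in_monoid_gen: "g \<in> G \<Longrightarrow> g \<in> monoid_gen G"
  using monoid_gen.add[OF _ monoid_gen.zero] by fastforce

lemma monoid_gen_mult: "x \<in> monoid_gen G \<Longrightarrow> n * x \<in> monoid_gen G"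
  by (induction n) (auto intro: monoid_gen_add monoid_gen.zero)

lemma monoid_gen_sum: "(\<And>k. k \<in> A \<Longrightarrow> f k \<in> monoid_gen G) \<Longrightarrow> sum f A \<in> monoid_gen G"
  by (induction A rule: infinite_finite_induct) (auto intro: monoid_gen_add monoid_gen.zero)

lemma monoid_gen_singleton_dvd: "x \<in> monoid_gen {m} \<Longrightarrow> m dvd x"
  by (induction rule: monoid_gen.induct) auto

lemma mingens_monoid_gen_subset: "0 \<notin> G \<Longrightarrow> mingens (monoid_gen G) \<subseteq> G"
proof
  fix x
  assume "0 \<notin> G" and "x \<in> mingens (monoid_gen G)"
  then have x: "x \<in> monoid_gen G" "x \<noteq> 0"
    and irreducible: "\<And>y z. y \<in> monoid_gen G \<Longrightarrow> z \<in> monoid_gen G \<Longrightarrow>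
      y \<noteq> 0 \<Longrightarrow> z \<noteq> 0 \<Longrightarrow> x \<noteq> y + z"
    unfolding mingens_def by auto
  from x obtain g y where "g \<in> G" "y \<in> monoid_gen G" "x = g + y"
    by (cases rule: monoid_gen.cases) auto
  with \<open>0 \<notin> G\<close> irreducible[of g y] show "x \<in> G"
    by (cases "y = 0") (auto intro: generator_in_monoid_gen)
qed

lemma numerical_semigroup_monoid_gen:
  assumes u: "u \<in> monoid_gen G" and v: "v \<in> monoid_gen G" and "0 < u" and "coprime v u"
  shows "numerical_semigroup (monoid_gen G)"
proof -
  obtain x where x: "[v * x = Suc 0] (mod u)"
    using cong_solve_coprime_nat[OF \<open>coprime v u\<close>] by blast
  have "n \<in> monoid_gen G" if "u * v \<le> n" for n
  proof -
    define j where "j = x * n mod u"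
    have "j * v mod u = x * n * v mod u"
      unfolding j_def by (rule mod_mult_left_eq)
    then have "[j * v = n * (v * x)] (mod u)"
      unfolding cong_def by (simp add: ac_simps)
    also have "[n * (v * x) = n * Suc 0] (mod u)"
      using x by (rule cong_mult[OF cong_refl])
    finally have "[n = j * v] (mod u)"
      by (simp add: cong_sym_eq)
    moreover have "j * v \<le> n"
    proof -
      have "j * v \<le> u * v"
        using \<open>0 < u\<close> by (simp add: j_def less_imp_le)
      then show ?thesis
        using that by linarith
    qed
    ultimately obtain q where "n = q * u + j * v"
      using cong_le_nat by blast
    then show ?thesis
      using u v by (simp add: monoid_gen_add monoid_gen_mult)
  qed
  then have "UNIV - monoid_gen G \<subseteq> {..<u * v}"
    by (auto simp: not_less[symmetric])
  then have "finite (UNIV - monoid_gen G)"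
    by (rule finite_subset) simp
  then show ?thesis
    unfolding numerical_semigroup_def by (blast intro: monoid_gen.zero monoid_gen_add)
qed

lemma
  assumes "mingens S = set xs" and "sorted_wrt (<) xs"
  shows gen_eq_nth: "gen S i = xs ! (i - 1)" and edim_eq_length: "edim S = length xs"
proof -
  have "distinct xs" "sorted xs"
    using assms(2) by (simp_all add: strict_sorted_iff)
  then have "sorted_list_of_set (mingens S) = xs"
    unfolding assms(1) sorted_list_of_set_sort_remdups by (simp add: distinct_remdups_id sorted_sort_id)
  then show "gen S i = xs ! (i - 1)" and "edim S = length xs"
    unfolding gen_def edim_def using \<open>distinct xs\<close> assms(1) by (simp_all add: distinct_card)
qed

lemma cong_cancel_coprime:
  fixes m b :: nat
  assumes "coprime m b" and "c * m + b * x = d * m + b * y"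
  shows "[x = y] (mod m)"
proof -
  have "[b * x = b * y] (mod m)"
    using arg_cong[OF assms(2), of "\<lambda>n. n mod m"] by (simp add: cong_def)
  then show ?thesis
    using assms(1) cong_mult_lcancel_nat[of b m] by (simp add: coprime_commute)
qed

lemma box_set_reindex:
  assumes "edim S = p + 1" and "\<And>k. k < p \<Longrightarrow> gen S (Suc (Suc k)) = g k"
  shows "box_set S f = {\<Sum>k<p. lam k * g k | lam. \<forall>k<p. lam k \<le> f (Suc (Suc k))}"
proof -
  have "gen S i = g (i - 2)" if "i \<in> {2..p + 1}" for i
  proof -
    have "i - 2 < p" and "Suc (Suc (i - 2)) = i"
      using that by auto
    then show ?thesis
      using assms(2)[of "i - 2"] by metis
  qed
  then have reindex: "(\<Sum>i\<in>{2..p + 1}. lam i * gen S i) = (\<Sum>k<p. lam (k + 2) * g k)" for lam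
    by (intro sum.reindex_bij_witness[of _ "\<lambda>k. k + 2" "\<lambda>i. i - 2"])
      (auto simp: Suc_diff_Suc numeral_2_eq_2)
  show ?thesis
  proof (intro equalityI subsetI)
    fix x
    assume "x \<in> box_set S f"
    then obtain lam where "x = (\<Sum>i\<in>{2..p + 1}. lam i * gen S i)" "\<forall>i\<in>{2..p + 1}. lam i \<le> f i"
      unfolding box_set_def assms(1) by auto
    then show "x \<in> {\<Sum>k<p. lam k * g k | lam. \<forall>k<p. lam k \<le> f (Suc (Suc k))}"
      unfolding reindex by (intro CollectI exI[of _ "\<lambda>k. lam (k + 2)"]) auto
  next
    fix x
    assume "x \<in> {\<Sum>k<p. lam k * g k | lam. \<forall>k<p. lam k \<le> f (Suc (Suc k))}"
    then obtain lam
      where x: "x = (\<Sum>k<p. lam k * g k)" and bound: "\<forall>k<p. lam k \<le> f (Suc (Suc k))"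
      by auto
    have "lam (i - 2) \<le> f i" if "i \<in> {2..p + 1}" for i
    proof -
      have "i - 2 < p" and "Suc (Suc (i - 2)) = i"
        using that by auto
      then show ?thesis
        using bound by metis
    qed
    moreover have "x = (\<Sum>i\<in>{2..p + 1}. lam (i - 2) * gen S i)"
      using reindex[of "\<lambda>i. lam (i - 2)"] x by simp
    ultimately show "x \<in> box_set S f"
      unfolding box_set_def assms(1) by (intro CollectI exI[of _ "\<lambda>i. lam (i - 2)"]) auto
  qed
qed

locale shifted_power_semigroup =
  fixes a b p :: nat
  assumes a_gt_1: "1 < a" and b_gt_1: "1 < b" and p_gt_1: "1 < p" and coprime_a_b: "coprime a b"
begin

definition m :: nat where "m = a ^ p"

\<comment> \<open>g k is the generator g_(k+2) of the paper, the multiplicity m being g_1\<close>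
definition g :: "nat \<Rightarrow> nat" where "g k = a ^ p + a ^ k * b"

definition G :: "nat set" where "G = insert (a ^ p) {a ^ p + a ^ k * b | k. k < p}"

abbreviation S :: "nat set" where "S \<equiv> monoid_gen G"

definition box :: "nat set" where "box = {\<Sum>k<p. lam k * g k | lam. \<forall>k<p. lam k < a}"

lemma G_eq: "G = insert m (g ` {..<p})"
  by (auto simp: G_def m_def g_def)

lemma g_eq: "g k = m + b * a ^ k"
  by (simp add: g_def m_def)

lemma a_less_m: "a < m"
  using power_strict_increasing[OF p_gt_1 a_gt_1] by (simp add: m_def)

lemma power_less_m: "k < p \<Longrightarrow> a ^ k < m"
  using power_strict_increasing[OF _ a_gt_1] by (simp add: m_def)

lemma coprime_m_b: "coprime m b"
  using coprime_a_b by (simp add: m_def)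

lemma m_in_S: "m \<in> S"
  by (rule generator_in_monoid_gen) (simp add: G_eq)

lemma g_in_S: "k < p \<Longrightarrow> g k \<in> S"
  by (rule generator_in_monoid_gen) (simp add: G_eq)

lemma lin_comb_in_S: "c * m + (\<Sum>k<p. \<mu> k * g k) \<in> S"
  by (intro monoid_gen_add monoid_gen_mult monoid_gen_sum m_in_S g_in_S) simp

lemma S_iff_lin_comb: "x \<in> S \<longleftrightarrow> (\<exists>c \<mu>. x = c * m + (\<Sum>k<p. \<mu> k * g k))"
proof
  assume "x \<in> S"
  then show "\<exists>c \<mu>. x = c * m + (\<Sum>k<p. \<mu> k * g k)"
  proof (induction rule: monoid_gen.induct)
    case zero
    show ?case
      by (intro exI[of _ 0] exI[of _ "\<lambda>_. 0"]) simp
  next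
    case (add h x)
    then obtain c \<mu> where x: "x = c * m + (\<Sum>k<p. \<mu> k * g k)"
      by blast
    consider "h = m" | j where "j < p" "h = g j"
      using add.hyps by (auto simp: G_eq)
    then show ?case
    proof cases
      case 1
      then have "h + x = (c + 1) * m + (\<Sum>k<p. \<mu> k * g k)"
        using x by simp
      then show ?thesis
        by blast
    next
      case 2
      have "(\<Sum>k<p. (\<mu> k + (if k = j then 1 else 0)) * g k)
          = (\<Sum>k<p. \<mu> k * g k + (if k = j then g k else 0))"
        by (intro sum.cong) auto
      also have "\<dots> = (\<Sum>k<p. \<mu> k * g k) + g j"
        using 2 by (simp add: sum.distrib)
      finally have "h + x = c * m + (\<Sum>k<p. (\<mu> k + (if k = j then 1 else 0)) * g k)"
        using x 2 by simp
      then show ?thesis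
        by (intro exI[of _ c] exI[of _ "\<lambda>k. \<mu> k + (if k = j then 1 else 0)"])
    qed
  qed
qed (auto intro: lin_comb_in_S)

lemma lin_comb_eq:
  "c * m + (\<Sum>k<p. \<mu> k * g k) = (c + (\<Sum>k<p. \<mu> k)) * m + b * (\<Sum>k<p. \<mu> k * a ^ k)"
  by (simp add: g_eq algebra_simps sum.distrib sum_distrib_left sum_distrib_right)

lemma S_normal_form:
  assumes "x \<in> S"
  obtains C M where "x = C * m + b * M" and "digit_sum a p M \<le> C" and "x \<noteq> 0 \<Longrightarrow> 1 \<le> C"
proof -
  obtain c \<mu> where x: "x = c * m + (\<Sum>k<p. \<mu> k * g k)"
    using assms S_iff_lin_comb by blast
  have "digit_sum a p (\<Sum>k<p. \<mu> k * a ^ k) \<le> (\<Sum>k<p. digit_sum a p (\<mu> k * a ^ k))"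
    using a_gt_1 by (intro digit_sum_sum_le) simp
  also have "\<dots> \<le> (\<Sum>k<p. \<mu> k * digit_sum a p (a ^ k))"
    using a_gt_1 by (intro sum_mono digit_sum_mult_le) simp
  also have "\<dots> \<le> (\<Sum>k<p. \<mu> k)"
    using a_gt_1 digit_sum_power_le by (intro sum_mono) (simp add: mult_le_cancel1)
  finally have "digit_sum a p (\<Sum>k<p. \<mu> k * a ^ k) \<le> c + (\<Sum>k<p. \<mu> k)"
    by simp
  moreover have "x \<noteq> 0 \<Longrightarrow> 1 \<le> c + (\<Sum>k<p. \<mu> k)"
    using x by (auto simp: Suc_le_eq)
  ultimately show thesis
    using x lin_comb_eq by (intro that) auto
qed

lemma a_mult_g_shift:
  assumes "k < p"
  obtains y where "y \<in> S" and "a * g k = m + y"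
proof -
  define a' where "a' = a - 2"
  have "a * g k = a * m + b * a ^ Suc k"
    by (simp add: g_eq algebra_simps)
  moreover have "a * m = (a' + 2) * m"
    using a_gt_1 by (intro arg_cong[where f = "\<lambda>x. x * m"]) (simp add: a'_def)
  ultimately have a_mult_g: "a * g k = m + ((a' + 1) * m + b * a ^ Suc k)"
    by simp
  have "(a' + 1) * m + b * a ^ Suc k \<in> S"
  proof (cases "Suc k < p")
    case True
    have "(a' + 1) * m + b * a ^ Suc k = a' * m + g (Suc k)"
      by (simp add: g_eq)
    also have "\<dots> \<in> S"
      using True by (intro monoid_gen_add monoid_gen_mult m_in_S g_in_S)
    finally show ?thesis .
  next
    case False
    then have "Suc k = p"
      using assms by simp
    then have "(a' + 1) * m + b * a ^ Suc k = (a' + 1 + b) * m"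
      by (simp add: m_def algebra_simps)
    also have "\<dots> \<in> S"
      by (intro monoid_gen_mult m_in_S)
    finally show ?thesis .
  qed
  then show thesis
    using a_mult_g by (rule that)
qed

lemma mult_g_shift:
  assumes "k < p" and "a \<le> h"
  obtains y where "y \<in> S" and "h * g k = m + y"
proof -
  obtain y where "y \<in> S" and y: "a * g k = m + y"
    using a_mult_g_shift[OF assms(1)] .
  have "h * g k = (h - a) * g k + a * g k"
    using assms(2) by (simp add: add_mult_distrib[symmetric])
  then have "h * g k = m + ((h - a) * g k + y)"
    using y by simp
  moreover have "(h - a) * g k + y \<in> S"
    using \<open>y \<in> S\<close> assms(1) by (intro monoid_gen_add monoid_gen_mult g_in_S)
  ultimately show thesis
    using that by simp
qed

lemma box_subset_S: "box \<subseteq> S"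
  unfolding box_def using lin_comb_in_S[of 0] by auto

lemma in_box_if_not_shift:
  assumes "s \<in> S" and not_shift: "\<And>y. y \<in> S \<Longrightarrow> s \<noteq> m + y"
  shows "s \<in> box"
proof -
  obtain c \<mu> where s: "s = c * m + (\<Sum>k<p. \<mu> k * g k)"
    using assms(1) S_iff_lin_comb by blast
  have "c = 0"
  proof (rule ccontr)
    assume "c \<noteq> 0"
    then have "s = m + ((c - 1) * m + (\<Sum>k<p. \<mu> k * g k))"
      using s by (cases c) auto
    then show False
      using not_shift[OF lin_comb_in_S[of "c - 1" \<mu>]] by simp
  qed
  moreover have "\<mu> j < a" if j: "j < p" for j
  proof (rule ccontr)
    assume "\<not> \<mu> j < a"
    then have "a \<le> \<mu> j"
      by simp
    then obtain y where "y \<in> S" and y: "\<mu> j * g j = m + y"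
      using mult_g_shift[OF j] by blast
    have "s = m + (y + c * m + (\<Sum>k\<in>{..<p} - {j}. \<mu> k * g k))"
      using s y j by (simp add: sum.remove)
    moreover have "y + c * m + (\<Sum>k\<in>{..<p} - {j}. \<mu> k * g k) \<in> S"
      using \<open>y \<in> S\<close> by (intro monoid_gen_add monoid_gen_mult monoid_gen_sum m_in_S g_in_S) auto
    ultimately show False
      using not_shift by simp
  qed
  ultimately show ?thesis
    unfolding box_def using s by auto
qed

lemma box_not_shift:
  assumes "w \<in> box" and "y \<in> S"
  shows "w \<noteq> m + y"
proof
  assume w_eq: "w = m + y"
  obtain lam where w: "w = (\<Sum>k<p. lam k * g k)" and lam: "\<forall>k<p. lam k < a"
    using assms(1) unfolding box_def by auto
  define L where "L = (\<Sum>k<p. lam k)"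
  define N where "N = (\<Sum>k<p. lam k * a ^ k)"
  have "digit_sum a p N = L" and "N < m"
    using digit_sum_digits[OF lam] digits_sum_less_power[OF lam] by (simp_all add: L_def N_def m_def)
  obtain C M where y: "y = C * m + b * M" and "digit_sum a p M \<le> C"
    using S_normal_form[OF assms(2)] by blast
  have sums: "L * m + b * N = (C + 1) * m + b * M"
    using w_eq w y lin_comb_eq[of 0 lam] by (simp add: L_def N_def)
  then have "[N = M] (mod m)"
    using coprime_m_b by (rule cong_cancel_coprime[rotated])
  then have "M mod m = N"
    using \<open>N < m\<close> by (simp add: cong_def)
  then have "L \<le> C"
    using \<open>digit_sum a p N = L\<close> \<open>digit_sum a p M \<le> C\<close> digit_sum_mod_power[of a p M]
    by (simp add: m_def)
  then have "L * m \<le> C * m"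
    by simp
  moreover have "(C + 1) * m = C * m + m"
    by simp
  ultimately have "b * M < b * N"
    using sums a_less_m by linarith
  then have "M < N"
    by simp
  then show False
    using \<open>M mod m = N\<close> \<open>N < m\<close> by simp
qed

lemma m_le_if_in_S:
  assumes "x \<in> S" and "x \<noteq> 0"
  shows "m \<le> x"
proof -
  obtain C M where x: "x = C * m + b * M" and "x \<noteq> 0 \<Longrightarrow> 1 \<le> C"
    by (rule S_normal_form[OF assms(1)]) (rule that; assumption)
  then have "1 \<le> C"
    using assms(2) by blast
  then have "m \<le> C * m"
    using mult_le_mono1[of 1 C m] by simp
  then show ?thesis
    using x by linarith
qed

lemma g_not_sum:
  assumes "k < p" and "y \<in> S" and "z \<in> S" and "y \<noteq> 0" and "z \<noteq> 0"
  shows "g k \<noteq> y + z"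
proof
  assume sum_eq: "g k = y + z"
  obtain C1 M1 where y: "y = C1 * m + b * M1" and C1: "y \<noteq> 0 \<Longrightarrow> 1 \<le> C1"
    by (rule S_normal_form[OF assms(2)]) (rule that; assumption)
  obtain C2 M2 where z: "z = C2 * m + b * M2" and C2: "z \<noteq> 0 \<Longrightarrow> 1 \<le> C2"
    by (rule S_normal_form[OF assms(3)]) (rule that; assumption)
  have sums: "1 * m + b * a ^ k = (C1 + C2) * m + b * (M1 + M2)"
    using sum_eq y z by (simp add: g_eq algebra_simps)
  then have "[a ^ k = M1 + M2] (mod m)"
    using coprime_m_b by (rule cong_cancel_coprime[rotated])
  moreover have "M1 + M2 < a ^ k"
  proof -
    have "m \<le> C1 * m" "m \<le> C2 * m"
      using C1 C2 assms(4,5) mult_le_mono1[of 1 _ m] by simp_all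
    moreover have "(C1 + C2) * m = C1 * m + C2 * m"
      by (rule add_mult_distrib)
    ultimately have "b * (M1 + M2) < b * a ^ k"
      using sums a_less_m by linarith
    then show ?thesis
      by simp
  qed
  ultimately show False
    using power_less_m[OF assms(1)] by (simp add: cong_def)
qed

lemma mingens_S: "mingens S = G"
proof
  show "mingens S \<subseteq> G"
    using a_less_m by (intro mingens_monoid_gen_subset) (auto simp: G_eq g_eq)
  show "G \<subseteq> mingens S"
  proof
    fix x
    assume "x \<in> G"
    have "x \<noteq> y + z" if "y \<in> S" "z \<in> S" "y \<noteq> 0" "z \<noteq> 0" for y z
    proof (cases "x = m")
      case True
      then show ?thesis
        using m_le_if_in_S[of y] m_le_if_in_S[of z] that a_less_m by auto
    next
      case False
      then obtain k where "k < p" "x = g k"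
        using \<open>x \<in> G\<close> by (auto simp: G_eq)
      then show ?thesis
        using g_not_sum[OF _ that] by simp
    qed
    moreover have "x \<noteq> 0"
      using \<open>x \<in> G\<close> a_less_m by (auto simp: G_eq g_eq)
    ultimately show "x \<in> mingens S"
      unfolding mingens_def using generator_in_monoid_gen[OF \<open>x \<in> G\<close>] by blast
  qed
qed

lemma mingens_S_sorted: "mingens S = set (m # map g [0..<p])" "sorted_wrt (<) (m # map g [0..<p])"
proof -
  have "g i < g j" if "i < j" for i j
    using power_strict_increasing[OF that a_gt_1] b_gt_1 by (simp add: g_eq)
  then have "sorted_wrt (<) (map g [0..<p])"
    by (auto simp: sorted_wrt_iff_nth_less)
  then show "sorted_wrt (<) (m # map g [0..<p])"
    using b_gt_1 a_gt_1 by (auto simp: g_eq)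
  show "mingens S = set (m # map g [0..<p])"
    unfolding mingens_S by (simp add: G_eq atLeast0LessThan)
qed

lemma gen_S_1: "gen S 1 = m"
  using gen_eq_nth[OF mingens_S_sorted, of 1] by simp

lemma gen_S_Suc_Suc: "k < p \<Longrightarrow> gen S (Suc (Suc k)) = g k"
  using gen_eq_nth[OF mingens_S_sorted, of "Suc (Suc k)"] by simp

lemma edim_S: "edim S = p + 1"
  using edim_eq_length[OF mingens_S_sorted] by simp

lemma Apery_S: "Apery S = box"
proof -
  have "Apery S = {s \<in> S. \<forall>y\<in>S. s \<noteq> m + y}"
    unfolding Apery_def Defs.multiplicity_def gen_S_1 by (auto simp: le_iff_add)
  then show ?thesis
    using box_subset_S box_not_shift in_box_if_not_shift by auto
qed

lemma numerical_semigroup_S: "numerical_semigroup S"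
proof (rule numerical_semigroup_monoid_gen)
  show "m \<in> S" "g 0 \<in> S" "0 < m"
    using m_in_S g_in_S p_gt_1 a_less_m by auto
  show "coprime (g 0) m"
    using coprime_m_b by (simp add: g_eq coprime_iff_gcd_eq_1 gcd.commute[of "m + b"])
qed

lemma single_lin_comb: "k < p \<Longrightarrow> (\<Sum>j<p. (if j = k then h else 0) * g j) = h * g k"
  by (simp add: if_distrib[of "\<lambda>x. x * _"] cong: if_cong)

lemma mult_g_in_box_iff: "k < p \<Longrightarrow> h * g k \<in> box \<longleftrightarrow> h < a"
proof
  assume "k < p" and "h * g k \<in> box"
  then show "h < a"
    using mult_g_shift[of k h] box_not_shift by (metis not_less)
next
  assume "k < p" and "h < a"
  then have "(\<Sum>j<p. (if j = k then h else 0) * g j) \<in> box"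
    unfolding box_def using a_gt_1 by (intro CollectI exI[of _ "\<lambda>j. if j = k then h else 0"]) auto
  then show "h * g k \<in> box"
    using single_lin_comb[OF \<open>k < p\<close>] by simp
qed

lemma box_set_S: "box_set S f = {\<Sum>k<p. lam k * g k | lam. \<forall>k<p. lam k \<le> f (Suc (Suc k))}"
  using edim_S gen_S_Suc_Suc by (rule box_set_reindex)

lemma alpha_S: "k < p \<Longrightarrow> alpha S (Suc (Suc k)) = a - 1"
proof -
  assume "k < p"
  then have "{h. h * gen S (Suc (Suc k)) \<in> Apery S} = {..<a}"
    using mult_g_in_box_iff by (auto simp: gen_S_Suc_Suc Apery_S)
  moreover have "Max {..<a} = a - 1"
    using a_gt_1 by (intro Max_eqI) auto
  ultimately show ?thesis
    unfolding alpha_def by simp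
qed

lemma alpha_rectangular_S: "alpha_rectangular S"
proof -
  have "lam \<le> a - 1 \<longleftrightarrow> lam < a" for lam
    using a_gt_1 by linarith
  then show ?thesis
    unfolding alpha_rectangular_def Apery_S box_set_S box_def by (simp add: alpha_S)
qed

lemma tau_S_2: "a \<le> tau S 2"
proof -
  have "{gen S j | j. 1 \<le> j \<and> j < 2} = {m}"
    using gen_S_1 by (auto simp: numeral_2_eq_2 le_less_Suc_eq intro: exI[of _ 1])
  moreover have "gen S 2 = g 0"
    using gen_S_Suc_Suc[of 0] p_gt_1 by (simp add: numeral_2_eq_2)
  ultimately have tau_eq: "tau S 2 = (LEAST h. 1 \<le> h \<and> h * g 0 \<in> monoid_gen {m}) - 1"
    unfolding tau_def by simp
  have "m \<le> h" if "1 \<le> h" and "h * g 0 \<in> monoid_gen {m}" for h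
  proof -
    have "m dvd h * m + h * b"
      using monoid_gen_singleton_dvd[OF that(2)] by (simp add: g_eq algebra_simps)
    then have "m dvd h * b"
      by (simp add: dvd_add_right_iff)
    then have "m dvd h"
      using coprime_m_b coprime_dvd_mult_left_iff by blast
    then show ?thesis
      using that(1) by (simp add: dvd_imp_le)
  qed
  moreover have "1 \<le> m \<and> m * g 0 \<in> monoid_gen {m}"
    using a_less_m monoid_gen_mult[OF generator_in_monoid_gen[of m "{m}"], of "g 0"]
    by (simp add: mult.commute)
  ultimately have "m \<le> (LEAST h. 1 \<le> h \<and> h * g 0 \<in> monoid_gen {m})"
    by (metis (mono_tags, lifting) LeastI)
  then show ?thesis
    using tau_eq a_less_m by simp
qed

lemma not_telescopic_S: "\<not> telescopic S"
proof
  assume "telescopic S"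
  then have box_eq: "box = box_set S (tau S)"
    unfolding telescopic_def Apery_S .
  have "\<forall>k<p. (if k = 0 then a else 0) \<le> tau S (Suc (Suc k))"
    using tau_S_2 by (simp add: numeral_2_eq_2)
  then have "(\<Sum>k<p. (if k = 0 then a else 0) * g k) \<in> box_set S (tau S)"
    unfolding box_set_S by (intro CollectI exI[of _ "\<lambda>k. if k = 0 then a else 0"]) simp
  then have "a * g 0 \<in> box"
    unfolding box_eq using single_lin_comb[of 0 a] p_gt_1 by simp
  then show False
    using mult_g_in_box_iff[of 0 a] p_gt_1 by simp
qed

end

theorem mainTheorem12:
  fixes a b p :: nat
  assumes "a > 1" and "b > 1" and "p > 1" and "gcd a b = 1"
  defines "S \<equiv> monoid_gen (insert (a ^ p) {a ^ p + a ^ k * b | k. k < p})"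
  shows "numerical_semigroup S \<and> alpha_rectangular S \<and> \<not> telescopic S"
proof -
  interpret shifted_power_semigroup a b p
    using assms by unfold_locales (simp_all add: coprime_iff_gcd_eq_1)
  show ?thesis
    unfolding S_def G_def[symmetric]
    using numerical_semigroup_S alpha_rectangular_S not_telescopic_S by blast
qed
end
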